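(* Let $\mathbb{F}$ be a field, $n\ge1$, $r\ge3$, and let $\mathcal{F},\mathcal{F}'$ be flags in $\mathbb{F}^n$ of length $r$ with $\mathrm{sig}(\mathcal{F})=(i_1,\dots,i_r)$ and $\mathrm{sig}(\mathcal{F}')=(j_1,\dots,j_r)$. If the semigroups $\varphi(\mathcal{F})$ and $\varphi(\mathcal{F}')$ are isomorphic, then $i_t=j_t$ for all $t=2,\dots,r-1$.
   Context: $M(n,\mathbb{F})$ is the semigroup of $n\times n$ matrices over $\mathbb{F}$, identified with linear operators on $\mathbb{F}^n$. A flag of length $r$ is a chain $0=V_0\subsetneq V_1\subsetneq\cdots\subsetneq V_r=\mathbb{F}^n$ of subspaces; its signature is $(d_1,\dots,d_r)$ with $d_i=\dim(V_i/V_{i-1})$. $\varphi(\mathcal{F})=\{a\in M(n,\mathbb{F}) : a(V_i)\subseteq V_{i-1}\text{ for all } i=1,\dots,r\}$. *)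

theory Defs
  imports "HOL-Analysis.Analysis"
begin

text \<open>F^n is modelled as the type 'a^'n with 'a a field and 'n a finite index type
  (so n = CARD('n) >= 1).\<close>

definition is_flag :: "nat \<Rightarrow> (nat \<Rightarrow> ('a::field ^ 'n) set) \<Rightarrow> bool" where
  "is_flag r V \<longleftrightarrow> V 0 = {0} \<and> V r = UNIV \<and> (\<forall>i\<le>r. vec.subspace (V i))
     \<and> (\<forall>i\<in>{1..r}. V (i - 1) \<subset> V i)"

text \<open>The i-th entry of the signature: dim (V i / V (i-1)) = dim V i - dim V (i-1).\<close>
definition flag_sig :: "(nat \<Rightarrow> ('a::field ^ 'n) set) \<Rightarrow> nat \<Rightarrow> nat" where
  "flag_sig V i = vec.dim (V i) - vec.dim (V (i - 1))"

definition flag_phi :: "nat \<Rightarrow> (nat \<Rightarrow> ('a::field ^ 'n) set) \<Rightarrow> ('a ^ 'n ^ 'n) set" where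
  "flag_phi r V = {A. \<forall>i\<in>{1..r}. (\<lambda>x. A *v x) ` V i \<subseteq> V (i - 1)}"

definition semigroup_iso :: "('a::semiring_1 ^ 'n ^ 'n) set \<Rightarrow> ('a ^ 'n ^ 'n) set
    \<Rightarrow> ('a ^ 'n ^ 'n \<Rightarrow> 'a ^ 'n ^ 'n) \<Rightarrow> bool" where
  "semigroup_iso S T f \<longleftrightarrow> bij_betw f S T \<and> (\<forall>a\<in>S. \<forall>b\<in>S. f (a ** b) = f a ** f b)"

end

theory Submission
  imports Defs
begin

(* Write S = flag_phi r V. The layer D_k = nil_layer S k = {a in S. s_1 ... s_k a = 0 for all s_i}
   is defined by the multiplication alone, and equals {a in S. range a <= V_k}. For a subspace U
   with V_1 <= U <= V_t and t < r, the annihilator Ann(U) = {b in S. b U = 0} is the left annihilator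
   of {a in S. range a <= U}, a subset of D_t, and U is recovered from Ann(U) as its common kernel.
   So an isomorphism f sends Ann(U) to the left annihilator of a subset of the corresponding layer
   of flag_phi r W; the common kernel Phi(U) of f(Ann(U)) lies between W_1 and W_t, and U |-> Phi(U)
   is strictly increasing. Climbing a maximal chain from V_1 to V_t gives
   dim V_t - dim V_1 <= dim W_t - dim W_1, by symmetry with equality for 1 <= t < r, and taking
   differences gives the signature entries i_t = j_t for 2 <= t <= r - 1. *)

lemma matrix_mul_zero_left [simp]: "(0::'a::semiring_1^'n^'n) ** a = 0"
  and matrix_mul_zero_right [simp]: "a ** (0::'a::semiring_1^'n^'n) = 0"
  by (simp_all add: matrix_eq flip: matrix_vector_mul_assoc)

lemma matrix_mul_eq_zero_iff: "b ** a = 0 \<longleftrightarrow> (\<forall>x. b *v (a *v x) = 0)"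
  by (simp add: matrix_eq matrix_vector_mul_assoc)

lemma bij_betw_image_eq:
  assumes "bij_betw f S T" "A \<subseteq> S" "B \<subseteq> T" "\<And>a. a \<in> S \<Longrightarrow> a \<in> A \<longleftrightarrow> f a \<in> B"
  shows "f ` A = B"
  using assms unfolding bij_betw_def by blast

lemma semigroup_iso_zero:
  assumes "semigroup_iso S T f" "0 \<in> S" "0 \<in> T"
  shows "f 0 = 0"
proof -
  obtain a where "a \<in> S" "f a = 0"
    using assms(1,3) by (auto simp: semigroup_iso_def bij_betw_def)
  then have "f 0 = f 0 ** f a" using assms(1,2) by (metis matrix_mul_zero_left semigroup_iso_def)
  with \<open>f a = 0\<close> show ?thesis by simp
qed

lemma semigroup_iso_eq_zero_iff:
  assumes "semigroup_iso S T f" "0 \<in> S" "0 \<in> T" "a \<in> S"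
  shows "f a = 0 \<longleftrightarrow> a = 0"
  using semigroup_iso_zero[OF assms(1-3)] assms
  by (metis bij_betw_imp_inj_on inj_on_eq_iff semigroup_iso_def)

lemma semigroup_iso_inv:
  assumes "semigroup_iso S T f" "\<forall>a\<in>S. \<forall>b\<in>S. a ** b \<in> S"
  shows "semigroup_iso T S (inv_into S f)"
proof -
  have bij: "bij_betw f S T" and hom: "\<forall>a\<in>S. \<forall>b\<in>S. f (a ** b) = f a ** f b"
    using assms(1) by (auto simp: semigroup_iso_def)
  have "inv_into S f (f a ** f b) = inv_into S f (f a) ** inv_into S f (f b)"
    if "a \<in> S" "b \<in> S" for a b
    using that hom assms(2) bij_betw_inv_into_left[OF bij] by metis
  then have "\<forall>c\<in>T. \<forall>d\<in>T. inv_into S f (c ** d) = inv_into S f c ** inv_into S f d"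
    using bij by (auto simp: bij_betw_def)
  then show ?thesis using bij_betw_inv_into[OF bij] by (simp add: semigroup_iso_def)
qed

definition left_annihilator :: "('a::semiring_1^'n^'n) set \<Rightarrow> ('a^'n^'n) set \<Rightarrow> ('a^'n^'n) set"
  where "left_annihilator S X = {b \<in> S. \<forall>a\<in>X. b ** a = 0}"

fun nil_layer :: "('a::semiring_1^'n^'n) set \<Rightarrow> nat \<Rightarrow> ('a^'n^'n) set" where
  "nil_layer S 0 = {a \<in> S. a = 0}"
| "nil_layer S (Suc k) = {a \<in> S. \<forall>s\<in>S. s ** a \<in> nil_layer S k}"

lemma left_annihilator_subset: "left_annihilator S X \<subseteq> S"
  by (auto simp: left_annihilator_def)

lemma nil_layer_subset: "nil_layer S k \<subseteq> S"
  by (cases k) auto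

lemma semigroup_iso_left_annihilator:
  assumes "semigroup_iso S T f" "0 \<in> S" "0 \<in> T" "\<forall>a\<in>S. \<forall>b\<in>S. a ** b \<in> S" "X \<subseteq> S"
  shows "f ` left_annihilator S X = left_annihilator T (f ` X)"
proof -
  have bij: "bij_betw f S T" using assms(1) by (simp add: semigroup_iso_def)
  have "b ** a = 0 \<longleftrightarrow> f b ** f a = 0" if "b \<in> S" "a \<in> X" for a b
  proof -
    have "b ** a \<in> S" "f (b ** a) = f b ** f a"
      using assms(1,4,5) that by (auto simp: semigroup_iso_def)
    then show ?thesis using semigroup_iso_eq_zero_iff[OF assms(1-3)] by metis
  qed
  then have "b \<in> left_annihilator S X \<longleftrightarrow> f b \<in> left_annihilator T (f ` X)" if "b \<in> S" for b
    using that bij_betw_apply[OF bij] by (auto simp: left_annihilator_def)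
  then show ?thesis by (intro bij_betw_image_eq[OF bij] left_annihilator_subset)
qed

lemma semigroup_iso_mem_nil_layer_iff:
  assumes "semigroup_iso S T f" "0 \<in> S" "0 \<in> T" "\<forall>a\<in>S. \<forall>b\<in>S. a ** b \<in> S" "a \<in> S"
  shows "a \<in> nil_layer S k \<longleftrightarrow> f a \<in> nil_layer T k"
  using assms(5)
proof (induction k arbitrary: a)
  case 0
  then show ?case
    using semigroup_iso_eq_zero_iff[OF assms(1-3)] assms(1)
    by (auto simp: semigroup_iso_def bij_betw_apply)
next
  case (Suc k)
  have bij: "bij_betw f S T" and hom: "\<forall>a\<in>S. \<forall>b\<in>S. f (a ** b) = f a ** f b"
    using assms(1) by (auto simp: semigroup_iso_def)
  have "a \<in> nil_layer S (Suc k) \<longleftrightarrow> (\<forall>s\<in>S. f (s ** a) \<in> nil_layer T k)"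
    using Suc assms(4) by auto
  also have "\<dots> \<longleftrightarrow> (\<forall>s\<in>S. f s ** f a \<in> nil_layer T k)"
    using hom Suc.prems by auto
  also have "\<dots> \<longleftrightarrow> f a \<in> nil_layer T (Suc k)"
    using bij bij_betw_apply[OF bij Suc.prems] by (auto simp: bij_betw_def)
  finally show ?case .
qed

lemma semigroup_iso_nil_layer:
  assumes "semigroup_iso S T f" "0 \<in> S" "0 \<in> T" "\<forall>a\<in>S. \<forall>b\<in>S. a ** b \<in> S"
  shows "f ` nil_layer S k = nil_layer T k"
proof -
  have "bij_betw f S T" using assms(1) by (simp add: semigroup_iso_def)
  from bij_betw_image_eq[OF this nil_layer_subset nil_layer_subset]
  show ?thesis using semigroup_iso_mem_nil_layer_iff[OF assms] by blast
qed

definition annihilator :: "('a::field^'n^'n) set \<Rightarrow> ('a^'n) set \<Rightarrow> ('a^'n^'n) set"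
  where "annihilator S U = {b \<in> S. \<forall>u\<in>U. b *v u = 0}"

definition common_kernel :: "('a::field^'n^'n) set \<Rightarrow> ('a^'n) set"
  where "common_kernel B = {v. \<forall>b\<in>B. b *v v = 0}"

lemma annihilator_subset: "annihilator S U \<subseteq> S"
  by (auto simp: annihilator_def)

lemma subspace_common_kernel: "vec.subspace (common_kernel B)"
  by (auto simp: vec.subspace_def common_kernel_def matrix_vector_right_distrib vec.scale)

lemma annihilator_common_kernel_left_annihilator:
  "annihilator T (common_kernel (left_annihilator T Y)) = left_annihilator T Y"
  by (auto simp: annihilator_def common_kernel_def left_annihilator_def matrix_mul_eq_zero_iff)

lemma exists_matrix_vanishing_on_subspace:
  fixes U :: "('a::field^'n) set"
  assumes "vec.subspace U" "v \<notin> U"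
  shows "\<exists>A :: 'a^'n^'n. (\<forall>x\<in>U. A *v x = 0) \<and> A *v v = w \<and> (\<forall>x. A *v x \<in> vec.span {w})"
proof -
  obtain B where B: "B \<subseteq> U" "vec.independent B" "U \<subseteq> vec.span B" "card B = vec.dim U"
    by (rule vec.basis_exists[of U])
  have "vec.span B \<subseteq> U" using B(1) assms(1) by (simp add: vec.span_minimal)
  then have v_B: "v \<notin> vec.span B" using assms(2) by blast
  then have "vec.independent (insert v B)" using B(2) vec.independent_insertI by blast
  from vec.linear_independent_extend_subspace[OF this, of "\<lambda>x. if x = v then w else 0"]
  obtain g where g: "Vector_Spaces.linear (*s) (*s) g"
      "\<forall>x\<in>insert v B. g x = (if x = v then w else 0)"
      "range g = vec.span ((\<lambda>x. if x = v then w else 0) ` insert v B)"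
    by blast
  have "vec.span ((\<lambda>x. if x = v then w else 0) ` insert v B) \<subseteq> vec.span {w}"
    by (rule vec.span_minimal) (auto simp: vec.span_base vec.span_zero)
  with g(3) have "g x \<in> vec.span {w}" for x by blast
  moreover have "g x = 0" if "x \<in> U" for x
  proof -
    have "\<forall>y\<in>B. g y = 0" using g(2) v_B vec.span_base[of _ B] by auto
    then show ?thesis using vec.linear_eq_0_on_span[OF g(1)] B(3) that by blast
  qed
  ultimately show ?thesis
    using g(2) by (intro exI[of _ "matrix g"]) (simp add: matrix_works[OF g(1)])
qed

context finite_dimensional_vector_space
begin

lemma dim_diff_le_of_strict_mono_on_subspaces:
  assumes "subspace A" "A \<subseteq> B" "subspace B"
    and into: "\<And>U. subspace U \<Longrightarrow> A \<subseteq> U \<Longrightarrow> U \<subseteq> B \<Longrightarrow> subspace (\<Phi> U) \<and> C \<subseteq> \<Phi> U \<and> \<Phi> U \<subseteq> D"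
    and strict: "\<And>U U'. subspace U \<Longrightarrow> subspace U' \<Longrightarrow> A \<subseteq> U \<Longrightarrow> U \<subset> U' \<Longrightarrow> U' \<subseteq> B
      \<Longrightarrow> \<Phi> U \<subset> \<Phi> U'"
  shows "dim B - dim A \<le> dim D - dim C"
proof -
  have "\<exists>U. subspace U \<and> A \<subseteq> U \<and> U \<subseteq> B \<and> dim U = dim A + k \<and> dim C + k \<le> dim (\<Phi> U)"
    if "k \<le> dim B - dim A" for k
    using that
  proof (induction k)
    case 0
    then show ?case using assms(1,2) into[of A] dim_subset by auto
  next
    case (Suc k)
    then obtain U where U: "subspace U" "A \<subseteq> U" "U \<subseteq> B" "dim U = dim A + k"
        "dim C + k \<le> dim (\<Phi> U)"
      by auto
    have "dim U < dim B" using U(4) Suc.prems by simp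
    then obtain v where "v \<in> B" "v \<notin> U" using U(3) by (metis subset_antisym subsetI less_irrefl)
    define U' where "U' = span (insert v U)"
    have "v \<notin> span U" using \<open>v \<notin> U\<close> U(1) span_eq_iff by metis
    then have "dim U' = dim U + 1" by (simp add: U'_def dim_insert)
    have "U' \<subseteq> B" using U(3) \<open>v \<in> B\<close> assms(3) by (simp add: U'_def span_minimal)
    have "U \<subset> U'" using \<open>v \<notin> U\<close> span_superset[of "insert v U"] by (auto simp: U'_def)
    then have "\<Phi> U \<subset> \<Phi> U'" using strict U(1,2) \<open>U' \<subseteq> B\<close> by (simp add: U'_def)
    moreover have "subspace (\<Phi> U)" "subspace (\<Phi> U')"
      using into U(1-3) \<open>U \<subset> U'\<close> \<open>U' \<subseteq> B\<close> by (auto simp: U'_def)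
    ultimately have "dim (\<Phi> U) < dim (\<Phi> U')" by (metis dim_psubset span_eq_iff)
    then show ?case
      using U \<open>dim U' = dim U + 1\<close> \<open>U \<subset> U'\<close> \<open>U' \<subseteq> B\<close>
      by (intro exI[of _ U']) (auto simp: U'_def)
  qed
  then obtain U where "subspace U" "A \<subseteq> U" "U \<subseteq> B" "dim C + (dim B - dim A) \<le> dim (\<Phi> U)"
    by blast
  moreover have "dim (\<Phi> U) \<le> dim D" using into calculation by (simp add: dim_subset)
  ultimately show ?thesis by linarith
qed

end

lemma flag_subspace: "is_flag r V \<Longrightarrow> i \<le> r \<Longrightarrow> vec.subspace (V i)"
  by (simp add: is_flag_def)

lemma flag_psubset: "is_flag r V \<Longrightarrow> 1 \<le> i \<Longrightarrow> i \<le> r \<Longrightarrow> V (i - 1) \<subset> V i"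
  by (simp add: is_flag_def)

lemma flag_mono:
  assumes "is_flag r V" "i \<le> j" "j \<le> r"
  shows "V i \<subseteq> V j"
  using assms(2,3)
proof (induction j)
  case (Suc j)
  show ?case
  proof (cases "i = Suc j")
    case False
    with Suc have "V i \<subseteq> V j" by simp
    also have "V j \<subset> V (Suc j)" using flag_psubset[OF assms(1), of "Suc j"] Suc.prems by simp
    finally show ?thesis by blast
  qed simp
qed simp

lemma flag_level_one_nonzero:
  assumes "is_flag r V" "1 \<le> r"
  obtains w where "w \<in> V 1" "w \<noteq> 0"
proof -
  have "V 0 \<subset> V 1" "V 0 = {0}" using assms flag_psubset[of r V 1] by (simp_all add: is_flag_def)
  then obtain w where "w \<in> V 1" "w \<notin> V 0" by blast
  with \<open>V 0 = {0}\<close> that show ?thesis by blast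
qed

lemma flag_phi_apply:
  "a \<in> flag_phi r V \<Longrightarrow> 1 \<le> i \<Longrightarrow> i \<le> r \<Longrightarrow> x \<in> V i \<Longrightarrow> a *v x \<in> V (i - 1)"
  unfolding flag_phi_def by (auto simp: image_subset_iff)

lemma flag_phi_apply_mono:
  assumes "is_flag r V" "a \<in> flag_phi r V" "j \<le> r" "x \<in> V j"
  shows "a *v x \<in> V j"
proof (cases j)
  case 0
  then show ?thesis using assms by (auto simp: is_flag_def)
next
  case (Suc i)
  then have "a *v x \<in> V i" using flag_phi_apply[OF assms(2)] assms(3,4) by fastforce
  then show ?thesis using flag_mono[OF assms(1), of i j] Suc assms(3) by auto
qed

lemma zero_in_flag_phi: "is_flag r V \<Longrightarrow> 0 \<in> flag_phi r V"
  by (auto simp: flag_phi_def is_flag_def vec.subspace_0)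

lemma flag_phi_mult_closed:
  assumes "is_flag r V" "a \<in> flag_phi r V" "b \<in> flag_phi r V"
  shows "a ** b \<in> flag_phi r V"
  unfolding flag_phi_def
proof (intro CollectI ballI image_subsetI)
  fix i x assume i: "i \<in> {1..r}" "x \<in> V i"
  then have "b *v x \<in> V (i - 1)" using flag_phi_apply[OF assms(3)] by auto
  then have "a *v (b *v x) \<in> V (i - 1)" using flag_phi_apply_mono[OF assms(1,2)] i by auto
  then show "(a ** b) *v x \<in> V (i - 1)" by (simp add: matrix_vector_mul_assoc)
qed

lemma flag_phi_rank_one:
  assumes "is_flag r V" "k \<le> r" "vec.subspace U" "V k \<subseteq> U" "v \<notin> U" "w \<in> V k"
  shows "\<exists>A\<in>flag_phi r V. (\<forall>x\<in>U. A *v x = 0) \<and> A *v v = w \<and> (\<forall>x. A *v x \<in> vec.span {w})"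
proof -
  obtain A where A: "\<forall>x\<in>U. A *v x = 0" "A *v v = w" "\<forall>x. A *v x \<in> vec.span {w}"
    using exists_matrix_vanishing_on_subspace[OF assms(3,5)] by blast
  have "vec.span {w} \<subseteq> V k"
    using flag_subspace[OF assms(1,2)] assms(6) by (simp add: vec.span_minimal)
  have "A *v x \<in> V (i - 1)" if i: "i \<in> {1..r}" "x \<in> V i" for i x
  proof (cases "i \<le> k")
    case True
    then have "A *v x = 0" using A(1) assms(4) flag_mono[OF assms(1) True assms(2)] i by blast
    moreover have "i - 1 \<le> r" using i by auto
    ultimately show ?thesis using vec.subspace_0[OF flag_subspace[OF assms(1)]] by simp
  next
    case False
    then have "V k \<subseteq> V (i - 1)" using flag_mono[OF assms(1), of k "i - 1"] i by auto
    then show ?thesis using A(3) \<open>vec.span {w} \<subseteq> V k\<close> by blast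
  qed
  then have "A \<in> flag_phi r V" by (auto simp: flag_phi_def)
  with A show ?thesis by blast
qed

lemma flag_Suc_eq_preimage:
  assumes "is_flag r V" "k < r"
  shows "V (Suc k) = {v. \<forall>s\<in>flag_phi r V. s *v v \<in> V k}"
proof (intro equalityI subsetI CollectI ballI)
  fix v s assume "v \<in> V (Suc k)" "s \<in> flag_phi r V"
  then show "s *v v \<in> V k" using flag_phi_apply[of s r V "Suc k"] assms(2) by simp
next
  fix v assume v: "v \<in> {v. \<forall>s\<in>flag_phi r V. s *v v \<in> V k}"
  show "v \<in> V (Suc k)"
  proof (rule ccontr)
    assume "v \<notin> V (Suc k)"
    obtain w where w: "w \<in> V (Suc k)" "w \<notin> V k"
      using flag_psubset[OF assms(1), of "Suc k"] assms(2) by auto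
    have "Suc k \<le> r" using assms(2) by simp
    obtain A where "A \<in> flag_phi r V" "\<forall>x\<in>V (Suc k). A *v x = 0" "A *v v = w"
        "\<forall>x. A *v x \<in> vec.span {w}"
      using flag_phi_rank_one[OF assms(1) \<open>Suc k \<le> r\<close> flag_subspace[OF assms(1) \<open>Suc k \<le> r\<close>]
          order_refl \<open>v \<notin> V (Suc k)\<close> w(1)] by blast
    then show False using v w(2) by auto
  qed
qed

lemma nil_layer_flag_phi:
  assumes "is_flag r V" "k \<le> r"
  shows "nil_layer (flag_phi r V) k = {a \<in> flag_phi r V. \<forall>x. a *v x \<in> V k}"
  using assms(2)
proof (induction k)
  case 0
  then show ?case using assms(1) by (auto simp: is_flag_def matrix_eq)
next
  case (Suc k)
  have "nil_layer (flag_phi r V) (Suc k)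
      = {a \<in> flag_phi r V. \<forall>s\<in>flag_phi r V. \<forall>x. s *v (a *v x) \<in> V k}"
    using Suc flag_phi_mult_closed[OF assms(1)] by (auto simp: matrix_vector_mul_assoc)
  also have "\<dots> = {a \<in> flag_phi r V. \<forall>x. a *v x \<in> V (Suc k)}"
    using flag_Suc_eq_preimage[OF assms(1)] Suc.prems by auto
  finally show ?case .
qed

lemma annihilator_flag_phi_eq_left_annihilator:
  assumes "is_flag r V" "t < r" "vec.subspace U" "U \<subseteq> V t"
  shows "annihilator (flag_phi r V) U
    = left_annihilator (flag_phi r V) {a \<in> flag_phi r V. \<forall>x. a *v x \<in> U}"
proof (intro equalityI subsetI)
  fix b assume "b \<in> annihilator (flag_phi r V) U"
  then show "b \<in> left_annihilator (flag_phi r V) {a \<in> flag_phi r V. \<forall>x. a *v x \<in> U}"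
    by (auto simp: annihilator_def left_annihilator_def matrix_mul_eq_zero_iff)
next
  fix b assume b: "b \<in> left_annihilator (flag_phi r V) {a \<in> flag_phi r V. \<forall>x. a *v x \<in> U}"
  have "b *v u = 0" if "u \<in> U" for u
  proof -
    \<comment> \<open>u is a value of an element of S with image in U, because U lies below V (r - 1)\<close>
    obtain z where "z \<notin> V (r - 1)"
      using flag_psubset[OF assms(1), of r] assms(2) assms(1) by (auto simp: is_flag_def)
    have "t \<le> r - 1" using assms(2) by simp
    then have "U \<subseteq> V (r - 1)" using flag_mono[OF assms(1)] assms(4) by fastforce
    then have "u \<in> V (r - 1)" using that by blast
    obtain A where A: "A \<in> flag_phi r V" "\<forall>x\<in>V (r - 1). A *v x = 0" "A *v z = u"
        "\<forall>x. A *v x \<in> vec.span {u}"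
      using flag_phi_rank_one[OF assms(1) diff_le_self flag_subspace[OF assms(1) diff_le_self]
          order_refl \<open>z \<notin> V (r - 1)\<close> \<open>u \<in> V (r - 1)\<close>] by blast
    have "vec.span {u} \<subseteq> U" using assms(3) that by (simp add: vec.span_minimal)
    with A have "\<forall>x. A *v x \<in> U" by blast
    with A(1) have "b ** A = 0" using b by (auto simp: left_annihilator_def)
    then show ?thesis using A(3) by (metis matrix_mul_eq_zero_iff)
  qed
  with b show "b \<in> annihilator (flag_phi r V) U"
    by (simp add: annihilator_def left_annihilator_def)
qed

lemma common_kernel_annihilator_flag_phi:
  assumes "is_flag r V" "1 \<le> r" "vec.subspace U" "V 1 \<subseteq> U"
  shows "common_kernel (annihilator (flag_phi r V) U) = U"
proof (intro equalityI subsetI)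
  fix v assume v: "v \<in> common_kernel (annihilator (flag_phi r V) U)"
  show "v \<in> U"
  proof (rule ccontr)
    assume "v \<notin> U"
    obtain w where "w \<in> V 1" "w \<noteq> 0" using flag_level_one_nonzero[OF assms(1,2)] .
    obtain A where "A \<in> flag_phi r V" "\<forall>x\<in>U. A *v x = 0" "A *v v = w"
        "\<forall>x. A *v x \<in> vec.span {w}"
      using flag_phi_rank_one[OF assms(1,2,3,4) \<open>v \<notin> U\<close> \<open>w \<in> V 1\<close>] by blast
    then show False
      using v \<open>w \<noteq> 0\<close> by (auto simp: common_kernel_def annihilator_def)
  qed
qed (auto simp: common_kernel_def annihilator_def)

lemma common_kernel_left_annihilator_subset:
  assumes "is_flag r V" "1 \<le> t" "t \<le> r" "Y \<subseteq> nil_layer (flag_phi r V) t"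
  shows "common_kernel (left_annihilator (flag_phi r V) Y) \<subseteq> V t"
proof
  fix v assume v: "v \<in> common_kernel (left_annihilator (flag_phi r V) Y)"
  show "v \<in> V t"
  proof (rule ccontr)
    assume "v \<notin> V t"
    obtain w where "w \<in> V 1" "w \<noteq> 0"
      using flag_level_one_nonzero[OF assms(1) order_trans[OF assms(2,3)]] .
    then have "w \<in> V t" using flag_mono[OF assms(1,2,3)] by blast
    obtain A where A: "A \<in> flag_phi r V" "\<forall>x\<in>V t. A *v x = 0" "A *v v = w"
        "\<forall>x. A *v x \<in> vec.span {w}"
      using flag_phi_rank_one[OF assms(1,3) flag_subspace[OF assms(1,3)] order_refl \<open>v \<notin> V t\<close>
          \<open>w \<in> V t\<close>] by blast
    have "A ** a = 0" if "a \<in> Y" for a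
      using that assms(4) A(2) nil_layer_flag_phi[OF assms(1,3)]
      by (auto simp: matrix_mul_eq_zero_iff)
    then show False
      using v A \<open>w \<noteq> 0\<close> by (auto simp: common_kernel_def left_annihilator_def)
  qed
qed

lemma flag_level_one_subset_common_kernel:
  assumes "is_flag r V" "1 \<le> r" "B \<subseteq> flag_phi r V"
  shows "V 1 \<subseteq> common_kernel B"
  using assms flag_phi_apply[of _ r V 1] by (auto simp: common_kernel_def is_flag_def)

lemma flag_phi_iso_annihilator:
  fixes V W :: "nat \<Rightarrow> ('a::field^'n) set"
  assumes V: "is_flag r V" and W: "is_flag r W"
    and f: "semigroup_iso (flag_phi r V) (flag_phi r W) f" and t: "1 \<le> t" "t < r"
    and U: "vec.subspace U" "U \<subseteq> V t"
  defines "K \<equiv> common_kernel (f ` annihilator (flag_phi r V) U)"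
  shows "f ` annihilator (flag_phi r V) U = annihilator (flag_phi r W) K" and "K \<subseteq> W t"
proof -
  let ?S = "flag_phi r V" and ?T = "flag_phi r W"
  note iso = f zero_in_flag_phi[OF V] zero_in_flag_phi[OF W]
  have closed: "\<forall>a\<in>?S. \<forall>b\<in>?S. a ** b \<in> ?S" using flag_phi_mult_closed[OF V] by blast
  define X where "X = {a \<in> ?S. \<forall>x. a *v x \<in> U}"
  have "f ` annihilator ?S U = left_annihilator ?T (f ` X)"
    using annihilator_flag_phi_eq_left_annihilator[OF V t(2) U]
      semigroup_iso_left_annihilator[OF iso closed] by (simp add: X_def)
  moreover have "f ` X \<subseteq> nil_layer ?T t"
  proof -
    have "X \<subseteq> nil_layer ?S t" using nil_layer_flag_phi[OF V] t U(2) by (auto simp: X_def)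
    then show ?thesis using semigroup_iso_nil_layer[OF iso closed] by blast
  qed
  ultimately show "f ` annihilator ?S U = annihilator ?T K" and "K \<subseteq> W t"
    using annihilator_common_kernel_left_annihilator[of ?T "f ` X"]
      common_kernel_left_annihilator_subset[OF W t(1)] t(2) by (simp_all only: K_def)
qed

lemma flag_phi_iso_dim_le:
  fixes V W :: "nat \<Rightarrow> ('a::field^'n) set"
  assumes V: "is_flag r V" and W: "is_flag r W"
    and f: "semigroup_iso (flag_phi r V) (flag_phi r W) f" and t: "1 \<le> t" "t < r"
  shows "vec.dim (V t) - vec.dim (V 1) \<le> vec.dim (W t) - vec.dim (W 1)"
proof -
  let ?S = "flag_phi r V"
  define \<Phi> where "\<Phi> U = common_kernel (f ` annihilator ?S U)" for U
  note image_annihilator = flag_phi_iso_annihilator(1)[OF V W f t, folded \<Phi>_def]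
  have "vec.subspace (\<Phi> U) \<and> W 1 \<subseteq> \<Phi> U \<and> \<Phi> U \<subseteq> W t"
    if "vec.subspace U" "U \<subseteq> V t" for U
  proof -
    have "f ` annihilator ?S U \<subseteq> flag_phi r W"
      using f annihilator_subset[of ?S U] by (auto simp: semigroup_iso_def bij_betw_def)
    then show ?thesis
      using subspace_common_kernel flag_level_one_subset_common_kernel[OF W] t
        flag_phi_iso_annihilator(2)[OF V W f t that] by (simp add: \<Phi>_def)
  qed
  moreover have "\<Phi> U \<subset> \<Phi> U'"
    if "vec.subspace U" "vec.subspace U'" "V 1 \<subseteq> U" "U \<subset> U'" "U' \<subseteq> V t" for U U'
  proof
    show "\<Phi> U \<subseteq> \<Phi> U'"
      using \<open>U \<subset> U'\<close> by (auto simp: \<Phi>_def common_kernel_def annihilator_def)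
    show "\<Phi> U \<noteq> \<Phi> U'"
    proof
      assume "\<Phi> U = \<Phi> U'"
      then have "f ` annihilator ?S U = f ` annihilator ?S U'"
        using image_annihilator that by simp
      moreover have "inj_on f ?S" using f by (simp add: semigroup_iso_def bij_betw_def)
      ultimately have "annihilator ?S U = annihilator ?S U'"
        using inj_on_image_eq_iff annihilator_subset by metis
      moreover have "1 \<le> r" "V 1 \<subseteq> U'" using that(3,4) t by auto
      ultimately have "U = U'"
        using common_kernel_annihilator_flag_phi[OF V] that(1-3) by metis
      with \<open>U \<subset> U'\<close> show False by blast
    qed
  qed
  moreover have "V 1 \<subseteq> V t" using flag_mono[OF V t(1)] t(2) by simp
  ultimately show ?thesis
    using vec.dim_diff_le_of_strict_mono_on_subspaces[of "V 1" "V t" \<Phi> "W 1" "W t"]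
      flag_subspace[OF V] t by simp
qed

lemma flag_sig_eq_dim_diff:
  assumes "is_flag r V" "2 \<le> t" "t \<le> r"
  shows "flag_sig V t = (vec.dim (V t) - vec.dim (V 1)) - (vec.dim (V (t - 1)) - vec.dim (V 1))"
proof -
  have "vec.dim (V 1) \<le> vec.dim (V (t - 1))" "vec.dim (V (t - 1)) \<le> vec.dim (V t)"
    using flag_mono[OF assms(1), of 1 "t - 1"] flag_mono[OF assms(1), of "t - 1" t] assms(2,3)
    by (simp_all add: vec.dim_subset)
  then show ?thesis by (simp add: flag_sig_def)
qed

theorem proposition16:
  fixes V W :: "nat \<Rightarrow> ('a::field ^ 'n) set" and r :: nat
  assumes "r \<ge> 3"
    and "is_flag r V" and "is_flag r W"
    and "\<exists>f. semigroup_iso (flag_phi r V) (flag_phi r W) f"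
  shows "\<forall>t\<in>{2..r - 1}. flag_sig V t = flag_sig W t"
proof
  obtain f where f: "semigroup_iso (flag_phi r V) (flag_phi r W) f" using assms(4) by blast
  have "semigroup_iso (flag_phi r W) (flag_phi r V) (inv_into (flag_phi r V) f)"
    using semigroup_iso_inv[OF f] flag_phi_mult_closed[OF assms(2)] by blast
  then have dim_diff_eq: "vec.dim (V t) - vec.dim (V 1) = vec.dim (W t) - vec.dim (W 1)"
    if "1 \<le> t" "t < r" for t
    using flag_phi_iso_dim_le[OF assms(2,3) f that] flag_phi_iso_dim_le[OF assms(3,2) _ that]
    by (simp add: le_antisym)
  fix t assume "t \<in> {2..r - 1}"
  then have "2 \<le> t" "t \<le> r" "1 \<le> t" "t < r" "1 \<le> t - 1" "t - 1 < r" using assms(1) by auto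
  then show "flag_sig V t = flag_sig W t"
    unfolding flag_sig_eq_dim_diff[OF assms(2) \<open>2 \<le> t\<close> \<open>t \<le> r\<close>]
      flag_sig_eq_dim_diff[OF assms(3) \<open>2 \<le> t\<close> \<open>t \<le> r\<close>]
    by (simp only: dim_diff_eq)
qed

end
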